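(* Let $L$ be a finite-dimensional Lie algebra over a field $F$ and let $S$ and $T$ be subalgebras of $L$ which are nil on $L$. Assume that $[S,T]\subseteq T$. Then $S+T$ is nil on $L$.
   Context: A subalgebra $S$ of $L$ is nil on $L$ if $\mathrm{ad}_L x$ is nilpotent for every $x\in S$. *)

theory Defs
  imports Complex_Main
begin

definition lie_algebra ::
  "('f::field \<Rightarrow> 'v::ab_group_add \<Rightarrow> 'v) \<Rightarrow> ('v \<Rightarrow> 'v \<Rightarrow> 'v) \<Rightarrow> bool" where
  "lie_algebra scale br \<longleftrightarrow>
     vector_space scale \<and>
     (\<forall>x y z. br (x + y) z = br x z + br y z) \<and>
     (\<forall>x y z. br x (y + z) = br x y + br x z) \<and>
     (\<forall>a x y. br (scale a x) y = scale a (br x y)) \<and>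
     (\<forall>a x y. br x (scale a y) = scale a (br x y)) \<and>
     (\<forall>x. br x x = 0) \<and>
     (\<forall>x y z. br x (br y z) + br y (br z x) + br z (br x y) = 0)"

definition finite_dim_lie_algebra ::
  "('f::field \<Rightarrow> 'v::ab_group_add \<Rightarrow> 'v) \<Rightarrow> ('v \<Rightarrow> 'v \<Rightarrow> 'v) \<Rightarrow> bool" where
  "finite_dim_lie_algebra scale br \<longleftrightarrow>
     lie_algebra scale br \<and> (\<exists>B. finite B \<and> module.span scale B = UNIV)"

definition lie_subalgebra ::
  "('f::field \<Rightarrow> 'v::ab_group_add \<Rightarrow> 'v) \<Rightarrow> ('v \<Rightarrow> 'v \<Rightarrow> 'v) \<Rightarrow> 'v set \<Rightarrow> bool" where
  "lie_subalgebra scale br S \<longleftrightarrow>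
     module.subspace scale S \<and> (\<forall>x\<in>S. \<forall>y\<in>S. br x y \<in> S)"

definition ad :: "('v \<Rightarrow> 'v \<Rightarrow> 'v) \<Rightarrow> 'v \<Rightarrow> 'v \<Rightarrow> 'v" where
  "ad br x = br x"

definition nil_on :: "('v::zero \<Rightarrow> 'v \<Rightarrow> 'v) \<Rightarrow> 'v set \<Rightarrow> bool" where
  "nil_on br S \<longleftrightarrow> (\<forall>x\<in>S. \<exists>n. (ad br x ^^ n) = (\<lambda>_. 0))"

definition lie_bracket_set ::
  "('f::field \<Rightarrow> 'v::ab_group_add \<Rightarrow> 'v) \<Rightarrow> ('v \<Rightarrow> 'v \<Rightarrow> 'v) \<Rightarrow> 'v set \<Rightarrow> 'v set \<Rightarrow> 'v set" where
  "lie_bracket_set scale br S T = module.span scale {br s t | s t. s \<in> S \<and> t \<in> T}"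

definition set_sum :: "'v::plus set \<Rightarrow> 'v set \<Rightarrow> 'v set" where
  "set_sum S T = {s + t | s t. s \<in> S \<and> t \<in> T}"

end

theory Submission
  imports Defs
begin

text \<open>
  Let \<open>V\<^sub>0 = 0\<close> and \<open>V\<^sub>i\<^sub>+\<^sub>1 = {w. [T, w] \<subseteq> V\<^sub>i}\<close>. Since \<open>T\<close> is nil, Engel's lemma makes this
  chain strictly increasing until it reaches \<open>L\<close>. Jacobi and \<open>[s, T] \<subseteq> T\<close> show that
  \<open>ad s\<close> preserves every \<open>V\<^sub>i\<close>, and \<open>ad (s + t) \<equiv> ad s\<close> modulo \<open>V\<^sub>i\<close> on \<open>V\<^sub>i\<^sub>+\<^sub>1\<close>. Hence
  \<open>ad (s + t)\<^sup>m\<close>, where \<open>ad s\<^sup>m = 0\<close>, maps each \<open>V\<^sub>i\<^sub>+\<^sub>1\<close> into \<open>V\<^sub>i\<close>, so the power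
  \<open>m (dim L + 1)\<close> of \<open>ad (s + t)\<close> vanishes.
\<close>

lemma orbit_enters_set:
  assumes "f ` A \<subseteq> A" "a \<in> A" "a \<notin> U" "(f ^^ n) a \<in> U"
  shows "\<exists>b\<in>A. b \<notin> U \<and> f b \<in> U"
  using assms(2-4)
proof (induction n arbitrary: a)
  case 0
  then show ?case by simp
next
  case (Suc n)
  show ?case
  proof (cases "f a \<in> U")
    case True
    then show ?thesis using Suc.prems by blast
  next
    case False
    have "(f ^^ n) (f a) \<in> U"
      using Suc.prems(3) by (simp add: funpow_Suc_right del: funpow.simps)
    then show ?thesis using Suc.IH[of "f a"] Suc.prems assms(1) False by blast
  qed
qed

locale finite_dimensional_lie_algebra = finite_dimensional_vector_space scale Basis
  for scale :: "'f::field \<Rightarrow> 'v::ab_group_add \<Rightarrow> 'v" and Basis :: "'v set" +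
  fixes br :: "'v \<Rightarrow> 'v \<Rightarrow> 'v"
  assumes bracket_add_left: "br (x + y) z = br x z + br y z"
    and bracket_add_right: "br x (y + z) = br x y + br x z"
    and bracket_scale_left: "br (scale a x) y = scale a (br x y)"
    and bracket_scale_right: "br x (scale a y) = scale a (br x y)"
    and bracket_self: "br x x = 0"
    and jacobi: "br x (br y z) + br y (br z x) + br z (br x y) = 0"
begin

lemma bracket_zero_left [simp]: "br 0 y = 0"
  using bracket_add_left[of 0 0 y] by simp

lemma bracket_zero_right [simp]: "br y 0 = 0"
  using bracket_add_right[of y 0 0] by simp

lemma bracket_minus_left: "br (- x) y = - br x y"
  using bracket_add_left[of x "- x" y] by (simp add: eq_neg_iff_add_eq_0 add.commute)

lemma bracket_minus_right: "br y (- x) = - br y x"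
  using bracket_add_right[of y x "- x"] by (simp add: eq_neg_iff_add_eq_0 add.commute)

lemma bracket_diff_right: "br z (x - y) = br z x - br z y"
  using bracket_add_right[of z x "- y"] bracket_minus_right by simp

lemma bracket_anticomm: "br x y = - br y x"
proof -
  have "0 = br (x + y) (x + y)" by (simp add: bracket_self)
  also have "\<dots> = br x x + br x y + (br y x + br y y)"
    by (simp add: bracket_add_left bracket_add_right)
  also have "\<dots> = br x y + br y x" by (simp add: bracket_self)
  finally show ?thesis by (metis eq_neg_iff_add_eq_0)
qed

lemma bracket_leibniz: "br m (br x w) = br x (br m w) - br (br x m) w"
proof -
  have "br m (br x w) + br x (br w m) + br w (br m x) = 0" by (rule jacobi)
  moreover have "br x (br w m) = - br x (br m w)"
    using bracket_anticomm[of w m] bracket_minus_right by simp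
  moreover have "br w (br m x) = br (br x m) w"
    using bracket_anticomm[of w "br m x"] bracket_anticomm[of m x] bracket_minus_left by simp
  ultimately show ?thesis by (simp add: algebra_simps)
qed

lemma bracket_mem_swap: "subspace M \<Longrightarrow> br m x \<in> M \<Longrightarrow> br x m \<in> M"
  unfolding bracket_anticomm[of x m] by (rule subspace_neg)

lemma subspace_bracket_preimage: "subspace U \<Longrightarrow> subspace {k. br k w \<in> U}"
  by (auto simp: subspace_def bracket_add_left bracket_scale_left)

lemma subspace_psubset_dim_less: "subspace A \<Longrightarrow> subspace B \<Longrightarrow> A \<subset> B \<Longrightarrow> dim A < dim B"
  using dim_psubset[of A B] by (metis span_eq_iff)

lemma exists_maximal_proper_subalgebra:
  assumes "lie_subalgebra scale br K" "K \<noteq> {0}"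
  obtains M where "lie_subalgebra scale br M" "M \<subset> K"
    "\<And>M'. lie_subalgebra scale br M' \<Longrightarrow> M' \<subset> K \<Longrightarrow> dim M' \<le> dim M"
proof -
  let ?P = "\<lambda>M. lie_subalgebra scale br M \<and> M \<subset> K"
  have "?P {0}"
    using assms subspace_0[of K] by (auto simp: lie_subalgebra_def subspace_def)
  moreover have "\<forall>M. ?P M \<longrightarrow> dim M < Suc dimension"
    using dim_subset_UNIV by (simp add: le_imp_less_Suc)
  ultimately show ?thesis
    using ex_has_greatest_nat[of ?P "{0}" dim "Suc dimension"] that by blast
qed

lemma lie_subalgebra_span_insert:
  assumes M: "lie_subalgebra scale br M" and x: "\<forall>m\<in>M. br m x \<in> M"
  shows "lie_subalgebra scale br (span (insert x M))"
proof -
  have sM: "subspace M" using M by (simp add: lie_subalgebra_def)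
  then have span_M: "span M = M" by simp
  have xM: "br x m \<in> M" if "m \<in> M" for m
    using x that bracket_mem_swap[OF sM] by blast
  have "br a b \<in> span (insert x M)"
    if ab: "a \<in> span (insert x M)" "b \<in> span (insert x M)" for a b
  proof -
    obtain c d where "a - scale c x \<in> M" "b - scale d x \<in> M"
      using ab by (auto simp: span_insert span_M)
    then obtain m n where a: "a = m + scale c x" and m: "m \<in> M"
      and b: "b = n + scale d x" and n: "n \<in> M"
      by (metis diff_add_cancel)
    have "br a b = br m n + scale d (br m x) + scale c (br x n)"
      unfolding a b
      by (simp add: bracket_add_left bracket_add_right bracket_scale_left bracket_scale_right
          bracket_self algebra_simps)
    also have "\<dots> \<in> M"
      using M m n x xM subspace_add[OF sM] subspace_scale[OF sM] by (simp add: lie_subalgebra_def)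
    finally show ?thesis by (rule span_base[OF insertI2])
  qed
  then show ?thesis by (simp add: lie_subalgebra_def)
qed

lemma killed_vectors_invariant:
  assumes U: "subspace U" "\<forall>u\<in>U. br x u \<in> U"
    and M: "\<forall>m\<in>M. br x m \<in> M"
    and w: "\<forall>m\<in>M. br m w \<in> U"
  shows "\<forall>m\<in>M. br m (br x w) \<in> U"
  using bracket_leibniz w M U subspace_diff[OF U(1)] by metis

text \<open>
  Induction on \<open>dim K\<close>: applied to the adjoint action of a maximal proper subalgebra \<open>M\<close> on \<open>M \<subset> K\<close>
  the hypothesis yields \<open>x\<close> normalising \<open>M\<close>, so \<open>K = M + F x\<close>; applied to \<open>M\<close> on \<open>U \<subset> W\<close> it yields a
  nonzero space \<open>W\<^sub>0\<close> modulo \<open>U\<close>, stable under the nilpotent \<open>ad x\<close>, which therefore kills a vector of it.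
\<close>
lemma engel_common_vector:
  assumes "lie_subalgebra scale br K" "nil_on br K" "subspace U" "subspace W" "U \<subset> W"
    "\<forall>k\<in>K. \<forall>w\<in>W. br k w \<in> W" "\<forall>k\<in>K. \<forall>u\<in>U. br k u \<in> U"
  shows "\<exists>w\<in>W. w \<notin> U \<and> (\<forall>k\<in>K. br k w \<in> U)"
  using assms
proof (induction "dim K" arbitrary: K U W rule: less_induct)
  case less
  have sK: "subspace K" using less.prems(1) by (simp add: lie_subalgebra_def)
  show ?case
  proof (cases "K = {0}")
    case True
    then show ?thesis using less.prems(5) subspace_0[OF less.prems(3)] by auto
  next
    case False
    obtain M where M: "lie_subalgebra scale br M" and MK: "M \<subset> K"
      and maximal: "\<And>M'. lie_subalgebra scale br M' \<Longrightarrow> M' \<subset> K \<Longrightarrow> dim M' \<le> dim M"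
      using exists_maximal_proper_subalgebra[OF less.prems(1) False] by blast
    have sM: "subspace M" using M by (simp add: lie_subalgebra_def)
    have dim_M: "dim M < dim K" using subspace_psubset_dim_less[OF sM sK MK] .
    have nil_M: "nil_on br M" using less.prems(2) MK by (auto simp: nil_on_def)
    obtain x where xK: "x \<in> K" and xM: "x \<notin> M" and x_normalises: "\<forall>m\<in>M. br m x \<in> M"
      using less.hyps[OF dim_M M nil_M sM sK MK] less.prems(1) MK M
      by (auto simp: lie_subalgebra_def)
    have K_eq: "span (insert x M) = K"
    proof (rule ccontr)
      assume "span (insert x M) \<noteq> K"
      moreover have "span (insert x M) \<subseteq> K"
        using xK MK sK by (intro span_minimal) auto
      ultimately have "dim (span (insert x M)) \<le> dim M"
        using maximal lie_subalgebra_span_insert[OF M x_normalises] by blast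
      moreover have "M \<subset> span (insert x M)"
        using xM span_superset[of "insert x M"] by blast
      ultimately show False
        using subspace_psubset_dim_less[OF sM subspace_span] by fastforce
    qed
    define W\<^sub>0 where "W\<^sub>0 = {w\<in>W. \<forall>m\<in>M. br m w \<in> U}"
    obtain w\<^sub>1 where w\<^sub>1: "w\<^sub>1 \<in> W\<^sub>0" "w\<^sub>1 \<notin> U"
      using less.hyps[OF dim_M M nil_M less.prems(3-5)] less.prems(6,7) MK
      unfolding W\<^sub>0_def by blast
    have "br x m \<in> M" if "m \<in> M" for m
      using x_normalises that bracket_mem_swap[OF sM] by blast
    then have "br x w \<in> W\<^sub>0" if "w \<in> W\<^sub>0" for w
      using that killed_vectors_invariant[of U x M w] xK less.prems(3,6,7)
      unfolding W\<^sub>0_def by blast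
    then have "br x ` W\<^sub>0 \<subseteq> W\<^sub>0" by blast
    moreover obtain n where "(br x ^^ n) = (\<lambda>_. 0)"
      using less.prems(2) xK by (auto simp: nil_on_def ad_def)
    ultimately obtain w where w: "w \<in> W\<^sub>0" "w \<notin> U" "br x w \<in> U"
      using orbit_enters_set[OF _ w\<^sub>1, of "br x" n] subspace_0[OF less.prems(3)] by auto
    have "K \<subseteq> {k. br k w \<in> U}"
      unfolding K_eq[symmetric] using w
      by (intro span_minimal subspace_bracket_preimage less.prems(3)) (auto simp: W\<^sub>0_def)
    then show ?thesis using w by (auto simp: W\<^sub>0_def)
  qed
qed

primrec kernel_series :: "'v set \<Rightarrow> nat \<Rightarrow> 'v set" where
  "kernel_series T 0 = {0}"
| "kernel_series T (Suc i) = {w. \<forall>t\<in>T. br t w \<in> kernel_series T i}"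

lemma subspace_kernel_series: "subspace (kernel_series T i)"
proof (induction i)
  case 0
  then show ?case by simp
next
  case (Suc i)
  then show ?case
    by (auto simp: subspace_def bracket_add_right bracket_scale_right)
qed

lemma kernel_series_mono: "kernel_series T i \<subseteq> kernel_series T (Suc i)"
  by (induction i) auto

lemma kernel_series_invariant: "t \<in> T \<Longrightarrow> w \<in> kernel_series T i \<Longrightarrow> br t w \<in> kernel_series T i"
  using kernel_series_mono[of T i] by auto

lemma kernel_series_psubset:
  assumes "lie_subalgebra scale br T" "nil_on br T" "kernel_series T i \<noteq> UNIV"
  shows "kernel_series T i \<subset> kernel_series T (Suc i)"
proof -
  obtain w where "w \<notin> kernel_series T i" "\<forall>t\<in>T. br t w \<in> kernel_series T i"
    using engel_common_vector[OF assms(1,2) subspace_kernel_series subspace_UNIV]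
      assms(3) kernel_series_invariant by blast
  then show ?thesis using kernel_series_mono[of T i] by auto
qed

lemma kernel_series_eq_UNIV_or_dim_ge:
  assumes "lie_subalgebra scale br T" "nil_on br T"
  shows "kernel_series T i = UNIV \<or> i \<le> dim (kernel_series T i)"
proof (induction i)
  case 0
  then show ?case by simp
next
  case (Suc i)
  show ?case
  proof (cases "kernel_series T i = UNIV")
    case True
    then show ?thesis using kernel_series_mono[of T i] by auto
  next
    case False
    then have "dim (kernel_series T i) < dim (kernel_series T (Suc i))"
      using kernel_series_psubset[OF assms] subspace_psubset_dim_less subspace_kernel_series
      by blast
    then show ?thesis using Suc.IH False by simp
  qed
qed

lemma kernel_series_top:
  assumes "lie_subalgebra scale br T" "nil_on br T"
  shows "kernel_series T (Suc dimension) = UNIV"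
  using kernel_series_eq_UNIV_or_dim_ge[OF assms, of "Suc dimension"]
    dim_subset_UNIV[of "kernel_series T (Suc dimension)"]
  by (metis Suc_n_not_le_n le_trans)

lemma kernel_series_normaliser_invariant:
  assumes "\<forall>t\<in>T. br s t \<in> T"
  shows "w \<in> kernel_series T i \<Longrightarrow> br s w \<in> kernel_series T i"
proof (induction i arbitrary: w)
  case 0
  then show ?case by simp
next
  case (Suc i)
  have "br t (br s w) \<in> kernel_series T i" if t: "t \<in> T" for t
  proof -
    have "br s (br t w) \<in> kernel_series T i" "br (br s t) w \<in> kernel_series T i"
      using Suc t assms by auto
    then show ?thesis
      using bracket_leibniz[of t s w] subspace_diff[OF subspace_kernel_series] by simp
  qed
  then show ?case by simp
qed

lemma ad_sum_iterate_congruent: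
  assumes st: "\<forall>t\<in>T. br s t \<in> T" and t: "t \<in> T" and w: "w \<in> kernel_series T (Suc i)"
  shows "(br (s + t) ^^ j) w - (br s ^^ j) w \<in> kernel_series T i"
proof (induction j)
  case 0
  then show ?case using subspace_0[OF subspace_kernel_series] by simp
next
  case (Suc j)
  define z where "z = (br (s + t) ^^ j) w"
  define y where "y = (br s ^^ j) w"
  have y: "y \<in> kernel_series T (Suc i)"
    unfolding y_def using w
    by (induction j) (auto intro: kernel_series_normaliser_invariant[OF st] simp del: kernel_series.simps)
  have zy: "z - y \<in> kernel_series T i" using Suc unfolding z_def y_def .
  then have "z \<in> kernel_series T (Suc i)"
    using y kernel_series_mono subspace_add[OF subspace_kernel_series]
    by (metis diff_add_cancel subsetD)
  then have "br s (z - y) + br t z \<in> kernel_series T i"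
    using kernel_series_normaliser_invariant[OF st zy] t subspace_add[OF subspace_kernel_series]
    by simp
  moreover have "br s (z - y) + br t z = br (s + t) z - br s y"
    by (simp add: bracket_add_left bracket_diff_right algebra_simps)
  ultimately show ?case unfolding z_def y_def by simp
qed

lemma ad_sum_power_vanishes_on_kernel_series:
  assumes t: "t \<in> T" and s: "(br s ^^ m) = (\<lambda>_. 0)" "\<forall>t\<in>T. br s t \<in> T"
  shows "w \<in> kernel_series T i \<Longrightarrow> (br (s + t) ^^ (m * i)) w = 0"
proof (induction i arbitrary: w)
  case 0
  then show ?case by simp
next
  case (Suc i)
  have "(br (s + t) ^^ m) w \<in> kernel_series T i"
    using ad_sum_iterate_congruent[OF s(2) t Suc.prems, of m] s(1) by simp
  then show ?case
    using Suc.IH by (simp add: add.commute[of m] funpow_add)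
qed

lemma nil_on_set_sum:
  assumes "nil_on br S" "lie_subalgebra scale br T" "nil_on br T"
    and "\<forall>s\<in>S. \<forall>t\<in>T. br s t \<in> T"
  shows "nil_on br (set_sum S T)"
  unfolding nil_on_def ad_def
proof
  fix x assume "x \<in> set_sum S T"
  then obtain s t where x: "x = s + t" and s: "s \<in> S" and t: "t \<in> T"
    by (auto simp: set_sum_def)
  obtain m where m: "(br s ^^ m) = (\<lambda>_. 0)"
    using assms(1) s by (auto simp: nil_on_def ad_def)
  have "\<forall>t\<in>T. br s t \<in> T" using assms(4) s by blast
  then have "(br x ^^ (m * Suc dimension)) w = 0" for w
    using ad_sum_power_vanishes_on_kernel_series[OF t m] kernel_series_top[OF assms(2,3)] x
    by (metis UNIV_I)
  then show "\<exists>n. (br x ^^ n) = (\<lambda>_. 0)" by blast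
qed

end

lemma finite_dim_lie_algebra_imp_locale:
  assumes "finite_dim_lie_algebra scale br"
  obtains Basis where "finite_dimensional_lie_algebra scale Basis br"
proof -
  have L: "lie_algebra scale br" and "\<exists>B. finite B \<and> module.span scale B = UNIV"
    using assms by (auto simp: finite_dim_lie_algebra_def)
  then obtain B where B: "finite B" "module.span scale B = UNIV" by blast
  interpret vector_space scale using L by (simp add: lie_algebra_def)
  obtain B' where B': "B' \<subseteq> B" "independent B'" "B \<subseteq> span B'"
    using maximal_independent_subset[of B] by blast
  have "span B' = UNIV"
    using B'(3) B(2) span_mono span_span by (metis top.extremum_uniqueI)
  then have "finite_dimensional_lie_algebra scale B' br"
    using B'(1,2) B(1) L finite_subset
    by unfold_locales (auto simp: lie_algebra_def)
  then show ?thesis by (rule that)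
qed

theorem lemma4p1:
  fixes scale :: "'f::field \<Rightarrow> 'v::ab_group_add \<Rightarrow> 'v"
    and br :: "'v \<Rightarrow> 'v \<Rightarrow> 'v"
    and S T :: "'v set"
  assumes "finite_dim_lie_algebra scale br"
    and "lie_subalgebra scale br S" and "nil_on br S"
    and "lie_subalgebra scale br T" and "nil_on br T"
    and "lie_bracket_set scale br S T \<subseteq> T"
  shows "nil_on br (set_sum S T)"
proof -
  obtain Basis where "finite_dimensional_lie_algebra scale Basis br"
    using finite_dim_lie_algebra_imp_locale[OF assms(1)] .
  then interpret finite_dimensional_lie_algebra scale Basis br .
  have "\<forall>s\<in>S. \<forall>t\<in>T. br s t \<in> T"
    using assms(6) unfolding lie_bracket_set_def by (auto intro: span_base)
  then show ?thesis using nil_on_set_sum assms(3-5) by blast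
qed

end
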